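(* Let $\ell\in\mathbb{N}$, $h\in\bigwedge(V_{2\ell}^* )$, and let $G$ be an Eulerian graph. Then the value $s_h((G,\omega,\kappa))$ is the same for every Eulerian orientation $\omega$ of $G$ and every local ordering $\kappa$ compatible with $\omega$.
   Context: Graphs may have loops and multiple edges; a graph is Eulerian if every vertex has even degree. $V_{2\ell}=\mathbb{C}^{2\ell}$ with standard basis $e_1,\dots,e_{2\ell}$; $f_i=-e_{i+\ell}$ for $i\le\ell$, $f_i=e_{i-\ell}$ for $i>\ell$. $\bigwedge(V_{2\ell}^* )=\bigoplus_{n=0}^{2\ell}\bigwedge^n(V_{2\ell}^* )$, and $h$ applied to an $n$-fold tensor means its component $h^n\in\bigwedge^n(V_{2\ell}^* )$ (a skew-symmetric $n$-linear form) applied to it. An Eulerian orientation $\omega$ orients each edge so each vertex has equal in- and out-degree (a loop contributes one incoming and one outgoing arc). A local ordering $\kappa$ compatible with $\omega$ consists, at each vertex $v$ of degree $d(v)$, of bijections $\kappa_v^-:\delta^-(v)\to\{1,3,\dots,d(v)-1\}$ (incoming arcs) and $\kappa_v^+:\delta^+(v)\to\{2,4,\dots,d(v)\}$ (outgoing arcs); $\kappa_v^{-1}(i)$ denotes the arc at $v$ with label $i$. $\kappa$ decomposes the edge set uniquely into closed walks $(v_1,a_1,\dots,a_i,v_i,a_{i+1},\dots,v_1)$ with $\kappa^-_{v_i}(a_i)+1=\kappa^+_{v_i}(a_{i+1})$ ($\kappa$-circuits); $c(G,\kappa)$ is their number. Define $s_h((G,\omega,\kappa))=(-1)^{c(G,\kappa)}\sum_{\phi:E(G)\to[2\ell]}\prod_{v\in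 V(G)} h\big(\bigotimes_{i=1,3,\dots,d(v)-1} e_{\phi(\kappa_v^{-1}(i))}\otimes f_{\phi(\kappa_v^{-1}(i+1))}\big)$. *)

theory Defs
  imports Complex_Main "HOL-Library.FuncSet"
begin

text \<open>Vectors of V_{2l} = C^{2l} are functions nat => complex supported on {1..2l}.\<close>

definition vecs :: "nat \<Rightarrow> (nat \<Rightarrow> complex) set" where
  "vecs l = {v. \<forall>j. j \<notin> {1..2*l} \<longrightarrow> v j = 0}"

definition ebasis :: "nat \<Rightarrow> nat \<Rightarrow> complex" where
  "ebasis i = (\<lambda>j. if j = i then 1 else 0)"

definition fbasis :: "nat \<Rightarrow> nat \<Rightarrow> nat \<Rightarrow> complex" where
  "fbasis l i = (if i \<le> l then (\<lambda>j. - ebasis (i + l) j) else ebasis (i - l))"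

text \<open>An element h of the exterior algebra of the dual: h n is its degree-n component,
  a skew-symmetric n-linear form on V_{2l}, applied to lists of n vectors.\<close>

definition multilinear_form :: "nat \<Rightarrow> nat \<Rightarrow> ((nat \<Rightarrow> complex) list \<Rightarrow> complex) \<Rightarrow> bool" where
  "multilinear_form l n H \<longleftrightarrow>
     (\<forall>xs k u w a b. length xs = n \<and> set xs \<subseteq> vecs l \<and> k < n \<and> u \<in> vecs l \<and> w \<in> vecs l \<longrightarrow>
        H (xs[k := (\<lambda>j. a * u j + b * w j)]) = a * H (xs[k := u]) + b * H (xs[k := w]))"

definition skew_form :: "nat \<Rightarrow> nat \<Rightarrow> ((nat \<Rightarrow> complex) list \<Rightarrow> complex) \<Rightarrow> bool" where
  "skew_form l n H \<longleftrightarrow>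
     (\<forall>xs i j. length xs = n \<and> set xs \<subseteq> vecs l \<and> i < j \<and> j < n \<longrightarrow>
        H (xs[i := xs ! j, j := xs ! i]) = - H xs)"

definition ext_dual :: "nat \<Rightarrow> (nat \<Rightarrow> (nat \<Rightarrow> complex) list \<Rightarrow> complex) \<Rightarrow> bool" where
  "ext_dual l h \<longleftrightarrow> (\<forall>n. multilinear_form l n (h n) \<and> skew_form l n (h n))"

text \<open>Graph: finite vertex set V, finite edge set E, each edge e has endpoints ends e
  (an unordered pair, stored as a pair; loops: fst = snd; multiple edges allowed).\<close>

definition graph :: "'v set \<Rightarrow> 'e set \<Rightarrow> ('e \<Rightarrow> 'v \<times> 'v) \<Rightarrow> bool" where
  "graph V E ends \<longleftrightarrow> finite V \<and> finite E \<and> (\<forall>e\<in>E. fst (ends e) \<in> V \<and> snd (ends e) \<in> V)"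

text \<open>Degree: loops count twice.\<close>
definition deg :: "'e set \<Rightarrow> ('e \<Rightarrow> 'v \<times> 'v) \<Rightarrow> 'v \<Rightarrow> nat" where
  "deg E ends v = card {e\<in>E. fst (ends e) = v} + card {e\<in>E. snd (ends e) = v}"

definition eulerian_graph :: "'v set \<Rightarrow> 'e set \<Rightarrow> ('e \<Rightarrow> 'v \<times> 'v) \<Rightarrow> bool" where
  "eulerian_graph V E ends \<longleftrightarrow> graph V E ends \<and> (\<forall>v\<in>V. even (deg E ends v))"

text \<open>An orientation assigns to each edge an ordered pair (tail, head).\<close>
definition orientation :: "'e set \<Rightarrow> ('e \<Rightarrow> 'v \<times> 'v) \<Rightarrow> ('e \<Rightarrow> 'v \<times> 'v) \<Rightarrow> bool" where
  "orientation E ends \<omega> \<longleftrightarrow> (\<forall>e\<in>E. \<omega> e = ends e \<or> \<omega> e = prod.swap (ends e))"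

definition eulerian_orientation ::
  "'v set \<Rightarrow> 'e set \<Rightarrow> ('e \<Rightarrow> 'v \<times> 'v) \<Rightarrow> ('e \<Rightarrow> 'v \<times> 'v) \<Rightarrow> bool" where
  "eulerian_orientation V E ends \<omega> \<longleftrightarrow> orientation E ends \<omega> \<and>
     (\<forall>v\<in>V. card {e\<in>E. snd (\<omega> e) = v} = card {e\<in>E. fst (\<omega> e) = v})"

text \<open>Local ordering: kin e is the label of arc e at its head (incoming there),
  kout e the label at its tail (outgoing there).\<close>
definition local_ordering ::
  "'v set \<Rightarrow> 'e set \<Rightarrow> ('e \<Rightarrow> 'v \<times> 'v) \<Rightarrow> ('e \<Rightarrow> 'v \<times> 'v) \<Rightarrow> ('e \<Rightarrow> nat) \<Rightarrow> ('e \<Rightarrow> nat) \<Rightarrow> bool" where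
  "local_ordering V E ends \<omega> kin kout \<longleftrightarrow>
     (\<forall>v\<in>V. bij_betw kin {e\<in>E. snd (\<omega> e) = v} {i. odd i \<and> i \<le> deg E ends v - 1}
          \<and> bij_betw kout {e\<in>E. fst (\<omega> e) = v} {i. even i \<and> 2 \<le> i \<and> i \<le> deg E ends v})"

definition in_arc :: "'e set \<Rightarrow> ('e \<Rightarrow> 'v \<times> 'v) \<Rightarrow> ('e \<Rightarrow> nat) \<Rightarrow> 'v \<Rightarrow> nat \<Rightarrow> 'e" where
  "in_arc E \<omega> kin v i = (THE e. e \<in> E \<and> snd (\<omega> e) = v \<and> kin e = i)"

definition out_arc :: "'e set \<Rightarrow> ('e \<Rightarrow> 'v \<times> 'v) \<Rightarrow> ('e \<Rightarrow> nat) \<Rightarrow> 'v \<Rightarrow> nat \<Rightarrow> 'e" where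
  "out_arc E \<omega> kout v i = (THE e. e \<in> E \<and> fst (\<omega> e) = v \<and> kout e = i)"

text \<open>Successor of an arc along its kappa-circuit: the arc leaving the head of e with label kin e + 1.\<close>
definition circ_next ::
  "'e set \<Rightarrow> ('e \<Rightarrow> 'v \<times> 'v) \<Rightarrow> ('e \<Rightarrow> nat) \<Rightarrow> ('e \<Rightarrow> nat) \<Rightarrow> 'e \<Rightarrow> 'e" where
  "circ_next E \<omega> kin kout e = out_arc E \<omega> kout (snd (\<omega> e)) (kin e + 1)"

text \<open>Number of kappa-circuits = number of orbits of the successor permutation on E.\<close>
definition num_circuits ::
  "'e set \<Rightarrow> ('e \<Rightarrow> 'v \<times> 'v) \<Rightarrow> ('e \<Rightarrow> nat) \<Rightarrow> ('e \<Rightarrow> nat) \<Rightarrow> nat" where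
  "num_circuits E \<omega> kin kout =
     card ((\<lambda>e. {e'. \<exists>n. (circ_next E \<omega> kin kout ^^ n) e = e'}) ` E)"

text \<open>The vector list e_{phi(kappa^-1(1))}, f_{phi(kappa^-1(2))}, ..., at vertex v.\<close>
definition vertex_args ::
  "nat \<Rightarrow> 'e set \<Rightarrow> ('e \<Rightarrow> 'v \<times> 'v) \<Rightarrow> ('e \<Rightarrow> 'v \<times> 'v) \<Rightarrow> ('e \<Rightarrow> nat) \<Rightarrow> ('e \<Rightarrow> nat)
     \<Rightarrow> ('e \<Rightarrow> nat) \<Rightarrow> 'v \<Rightarrow> (nat \<Rightarrow> complex) list" where
  "vertex_args l E ends \<omega> kin kout \<phi> v =
     concat (map (\<lambda>j. [ebasis (\<phi> (in_arc E \<omega> kin v (2*j+1))),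
                       fbasis l (\<phi> (out_arc E \<omega> kout v (2*j+2)))])
             [0..<deg E ends v div 2])"

definition s_h ::
  "nat \<Rightarrow> (nat \<Rightarrow> (nat \<Rightarrow> complex) list \<Rightarrow> complex) \<Rightarrow> 'v set \<Rightarrow> 'e set \<Rightarrow> ('e \<Rightarrow> 'v \<times> 'v)
     \<Rightarrow> ('e \<Rightarrow> 'v \<times> 'v) \<Rightarrow> ('e \<Rightarrow> nat) \<Rightarrow> ('e \<Rightarrow> nat) \<Rightarrow> complex" where
  "s_h l h V E ends \<omega> kin kout =
     (-1) ^ num_circuits E \<omega> kin kout *
     (\<Sum>\<phi>\<in>PiE E (\<lambda>_. {1..2*l}).
        \<Prod>v\<in>V. h (deg E ends v) (vertex_args l E ends \<omega> kin kout \<phi> v))"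

end

theory Submission
  imports Defs "HOL-Combinatorics.Orbits"
begin

text \<open>Split every arc \<open>e\<close> into a head half, carrying \<open>e\<^sub>\<phi>\<^sub>(\<^sub>e\<^sub>)\<close>, and a tail half, carrying
  \<open>f\<^sub>\<phi>\<^sub>(\<^sub>e\<^sub>)\<close>; the local ordering lists the halves at each vertex. Passing from
  \<open>(\<omega>\<^sub>1, \<kappa>\<^sub>1)\<close> to \<open>(\<omega>\<^sub>2, \<kappa>\<^sub>2)\<close> is done in two moves. Reversing the set \<open>D\<close> of arcs on which
  the orientations differ swaps the two halves of each such arc; after the substitution
  \<open>\<phi>(e) \<mapsto> \<phi>(e) \<plusminus> \<ell>\<close> the vectors are the same up to one sign per arc, so the state sum changes
  by \<open>(-1)\<^bsup>|D|\<^esup>\<close>. Reordering the arguments at each vertex multiplies the summand, by skew-symmetry,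
  by the sign of a permutation \<open>\<sigma>\<close> of all half-edges, and \<open>\<sigma>\<close> is the reversal of \<open>D\<close>
  composed with relabellings \<open>A\<close> of heads and \<open>B\<close> of tails satisfying \<open>B \<circ> c\<^sub>2 = c\<^sub>1 \<circ> A\<close>,
  where \<open>c\<^sub>i\<close> is the successor permutation of the \<open>\<kappa>\<^sub>i\<close>-circuits. As
  \<open>(-1)\<^bsup>#orbits(c)\<^esup> = (-1)\<^bsup>|E|\<^esup> sign c\<close> for every permutation \<open>c\<close> of \<open>E\<close>, all these signs
  cancel against the factors \<open>(-1)\<^bsup>c(G,\<kappa>\<^sub>i)\<^esup>\<close>.\<close>

lemma bij_betw_of_inj_on_endo:
  "finite A \<Longrightarrow> f ` A \<subseteq> A \<Longrightarrow> inj_on f A \<Longrightarrow> bij_betw f A A"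
  by (simp add: bij_betw_def endo_inj_surj)

lemma prod_eq_neg_of_one_factor:
  fixes f g :: "'a \<Rightarrow> 'b :: comm_ring_1"
  assumes "finite A" "a \<in> A" "g a = - f a" "\<And>x. x \<in> A \<Longrightarrow> x \<noteq> a \<Longrightarrow> g x = f x"
  shows "prod g A = - prod f A"
proof -
  have "prod g A = g a * prod g (A - {a})" using prod.remove[OF assms(1,2)] .
  also have "prod g (A - {a}) = prod f (A - {a})" using assms(4) by (intro prod.cong) auto
  finally show ?thesis using prod.remove[OF assms(1,2), of f] assms(3) by simp
qed

lemma concat_map_pairs: "concat (map (\<lambda>j. [F (2*j), F (2*j+1)]) [0..<n]) = map F [0..<2*n]"
  by (induction n) (auto simp: mult_2)

section \<open>Orbits and signs of permutations\<close>

lemma orbit_eq_of_mem_orbit: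
  assumes "permutation f" "y \<in> orbit f z"
  shows "orbit f y = orbit f z"
  using orbit_cyclic_eq3[OF cyclic_on_orbit'[OF assms(1)] assms(2)] .

text \<open>\<open>g\<close> below is \<open>f\<close> with \<open>x\<close> cut out of its cycle and made a fixed point.\<close>

lemma funpow_shortcut_in_funpow:
  assumes g: "\<And>z. g z = (if z = x then x else if f z = x then f x else f z)"
    and "f x \<noteq> x" "y \<noteq> x"
  shows "\<exists>m. (f^^m) y = (g^^n) y \<and> (g^^n) y \<noteq> x"
proof (induction n)
  case 0 then show ?case using assms(3) by (intro exI[of _ 0]) simp
next
  case (Suc n)
  then obtain m where m: "(f^^m) y = (g^^n) y" "(g^^n) y \<noteq> x" by blast
  show ?case
  proof (cases "f ((g^^n) y) = x")
    case True
    then have "(g^^Suc n) y = f x" using m(2) g[of "(g^^n) y"] by simp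
    moreover have "(f^^Suc (Suc m)) y = f x" using m(1) True by simp
    ultimately show ?thesis using assms(2) by metis
  next
    case False
    then have "(g^^Suc n) y = f ((g^^n) y)" using m(2) g[of "(g^^n) y"] by simp
    moreover have "(f^^Suc m) y = f ((g^^n) y)" using m(1) by simp
    ultimately show ?thesis using False by metis
  qed
qed

lemma funpow_in_funpow_shortcut:
  assumes g: "\<And>z. g z = (if z = x then x else if f z = x then f x else f z)"
    and "f x \<noteq> x" "y \<noteq> x"
  shows "(f^^n) y \<noteq> x \<Longrightarrow> \<exists>m. (g^^m) y = (f^^n) y"
proof (induction n rule: less_induct)
  case (less n)
  show ?case
  proof (cases n)
    case 0 then show ?thesis by (intro exI[of _ 0]) simp
  next
    case (Suc k)
    show ?thesis
    proof (cases "(f^^k) y = x")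
      case False
      moreover have "k < n" using Suc by simp
      ultimately obtain m where "(g^^m) y = (f^^k) y" using less.IH by blast
      then have "(g^^Suc m) y = (f^^n) y" using g[of "(f^^k) y"] False less.prems Suc by simp
      then show ?thesis by blast
    next
      case True
      then obtain j where kj: "k = Suc j" using assms(3) by (cases k) auto
      have "(f^^j) y \<noteq> x" using True kj assms(2) by auto
      moreover have "j < n" using Suc kj by simp
      ultimately obtain m where "(g^^m) y = (f^^j) y" using less.IH by blast
      then have "(g^^Suc m) y = (f^^n) y"
        using g[of "(f^^j) y"] True kj Suc \<open>(f^^j) y \<noteq> x\<close> by simp
      then show ?thesis by blast
    qed
  qed
qed

lemma orbit_transpose_compose:
  assumes f: "permutation f" and "f x \<noteq> x" "y \<noteq> x"
  shows "orbit (Transposition.transpose x (f x) \<circ> f) y = orbit f y - {x}"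
proof -
  define g where "g = Transposition.transpose x (f x) \<circ> f"
  have "permutation g"
    unfolding g_def using f by (simp add: permutation_compose permutation_swap_id)
  have "inj f" using f permutation_bijective bij_is_inj by blast
  then have g: "g z = (if z = x then x else if f z = x then f x else f z)" for z
    unfolding g_def using assms(2) by (auto simp: Transposition.transpose_def dest: injD)
  show ?thesis
    unfolding g_def[symmetric] orbit_altdef_permutation[OF f] orbit_altdef_permutation[OF \<open>permutation g\<close>]
  proof (intro set_eqI iffI)
    fix z assume "z \<in> {(g^^n) y |n. True}"
    then obtain n where "z = (g^^n) y" by blast
    then show "z \<in> {(f^^n) y |n. True} - {x}"
      using funpow_shortcut_in_funpow[OF g assms(2,3), of n] by (metis (mono_tags, lifting) CollectI DiffI singletonD)
  next
    fix z assume "z \<in> {(f^^n) y |n. True} - {x}"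
    then obtain n where "z = (f^^n) y" "z \<noteq> x" by blast
    then show "z \<in> {(g^^n) y |n. True}"
      using funpow_in_funpow_shortcut[OF g assms(2,3), of n] by (metis (mono_tags, lifting) CollectI)
  qed
qed

lemma sign_permutes_card_orbits:
  assumes "finite S" "f permutes S"
  shows "(-1::int) ^ card (orbit f ` S) = (-1) ^ card S * sign f"
  using assms
proof (induction S arbitrary: f rule: finite_induct)
  case empty
  then have "f = id" by (auto simp: permutes_def fun_eq_iff)
  then show ?case by simp
next
  case (insert x F f)
  define g where "g = Transposition.transpose x (f x) \<circ> f"
  have "g permutes F" unfolding g_def by (rule permutes_insert_lemma[OF insert.prems])
  then have IH: "(-1::int) ^ card (orbit g ` F) = (-1) ^ card F * sign g" by (rule insert.IH)
  have f: "permutation f" using insert by (meson finite.insertI permutation_permutes)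
  show ?case
  proof (cases "f x = x")
    case True
    have "{x} \<notin> orbit f ` F"
      using permutation_self_in_orbit[OF f] insert.hyps(2) by (metis imageE singletonD)
    moreover have "orbit f x = {x}" using True by (simp add: orbit_eq_singleton_iff)
    ultimately have "card (orbit f ` insert x F) = Suc (card (orbit f ` F))"
      using insert.hyps by simp
    moreover have "g = f" using True unfolding g_def by simp
    ultimately show ?thesis using IH insert.hyps by simp
  next
    case False
    have sign_g: "sign g = - sign f" unfolding g_def
      using sign_compose[OF permutation_swap_id f, of x "f x"] False by (simp add: sign_swap_id)
    have "f x \<in> F" using False permutes_in_image[OF insert.prems, of x] by auto
    then have orbits_f: "orbit f ` insert x F = orbit f ` F"
      using permutation_orbit_step[OF f, of x] by (metis image_eqI image_insert insert_absorb)
    have orbits_g: "orbit g ` F = (\<lambda>Q. Q - {x}) ` orbit f ` F"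
      unfolding g_def image_image
    proof (intro image_cong refl)
      fix y assume "y \<in> F"
      then have "y \<noteq> x" using insert.hyps(2) by blast
      then show "orbit (Transposition.transpose x (f x) \<circ> f) y = orbit f y - {x}"
        by (rule orbit_transpose_compose[OF f False])
    qed
    have "inj_on (\<lambda>Q. Q - {x}) (orbit f ` F)"
    proof (rule inj_onI)
      fix Q1 Q2 assume "Q1 \<in> orbit f ` F" "Q2 \<in> orbit f ` F" and eq: "Q1 - {x} = Q2 - {x}"
      then obtain y1 y2 where y: "y1 \<in> F" "Q1 = orbit f y1" "y2 \<in> F" "Q2 = orbit f y2" by blast
      then have "y1 \<in> Q2"
        using eq permutation_self_in_orbit[OF f, of y1] insert.hyps(2) by blast
      then show "Q1 = Q2" using y orbit_eq_of_mem_orbit[OF f] by simp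
    qed
    then have "card (orbit g ` F) = card (orbit f ` insert x F)"
      unfolding orbits_g orbits_f by (rule card_image)
    then show ?thesis using IH sign_g insert.hyps by simp
  qed
qed

lemma sign_on_UN:
  assumes "finite W" "\<And>v. v \<in> W \<Longrightarrow> finite (K v)"
    and "\<And>v w. v \<in> W \<Longrightarrow> w \<in> W \<Longrightarrow> v \<noteq> w \<Longrightarrow> K v \<inter> K w = {}"
    and "\<And>v. v \<in> W \<Longrightarrow> bij_betw \<sigma> (K v) (K v)"
  shows "sign_on (\<Union>v\<in>W. K v) \<sigma> = (\<Prod>v\<in>W. sign_on (K v) \<sigma>)"
  using assms
proof (induction W rule: finite_induct)
  case empty
  have "restrict_id \<sigma> {} = id" by (auto simp: restrict_id_def)
  then show ?case by (simp add: sign_on_def)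
next
  case (insert w W)
  define U where "U = (\<Union>v\<in>W. K v)"
  have U: "finite U" "bij_betw \<sigma> U U" "K w \<inter> U = {}"
    unfolding U_def using insert by (auto intro!: bij_betw_UNION_disjoint simp: disjoint_family_on_def)
  have Kw: "finite (K w)" "bij_betw \<sigma> (K w) (K w)" using insert.prems by auto
  have split: "restrict_id \<sigma> (K w \<union> U) = restrict_id \<sigma> (K w) \<circ> restrict_id \<sigma> U"
    using U(2,3) by (auto simp: fun_eq_iff restrict_id_def bij_betw_def)
  have perms: "restrict_id \<sigma> (K w) permutes K w \<union> U" "restrict_id \<sigma> U permutes K w \<union> U"
    using permutes_restrict_id[OF Kw(2)] permutes_restrict_id[OF U(2)]
    by (auto intro: permutes_subset)
  have "sign_on (K w \<union> U) \<sigma> = sign_on (K w) \<sigma> * sign_on U \<sigma>"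
    unfolding sign_on_def split using U(1) Kw(1) perms
    by (intro sign_compose) (auto simp: permutation_permutes)
  then show ?case using insert unfolding U_def by simp
qed

section \<open>Skew-symmetric forms\<close>

lemma multilinear_form_neg:
  assumes "multilinear_form l n H" "length xs = n" "set xs \<subseteq> vecs l" "k < n"
  shows "H (xs[k := (\<lambda>j. - (xs ! k) j)]) = - H xs"
proof -
  have "xs ! k \<in> vecs l" using assms(2-4) nth_mem by blast
  then have "H (xs[k := (\<lambda>j. (-1) * (xs ! k) j + 0 * (xs ! k) j)]) =
      (-1) * H (xs[k := xs ! k]) + 0 * H (xs[k := xs ! k])"
    using assms unfolding multilinear_form_def by blast
  then show ?thesis by simp
qed

lemma skew_form_swap:
  assumes "skew_form l n H" "length xs = n" "set xs \<subseteq> vecs l" "i < n" "j < n" "i \<noteq> j"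
  shows "H (xs[i := xs ! j, j := xs ! i]) = - H xs"
proof (cases "i < j")
  case True
  then show ?thesis using assms unfolding skew_form_def by blast
next
  case False
  have "xs[i := xs ! j, j := xs ! i] = xs[j := xs ! i, i := xs ! j]"
    using assms(6) by (rule list_update_swap)
  then show ?thesis using assms False unfolding skew_form_def by (metis linorder_neqE_nat)
qed

lemma skew_form_permutes:
  assumes H: "skew_form l d H" and \<sigma>: "\<sigma> permutes K" "finite K"
    and P: "bij_betw P {..<d} K" and F: "\<forall>x\<in>K. F x \<in> vecs l"
  shows "H (map (\<lambda>k. F (\<sigma> (P k))) [0..<d]) = of_int (sign \<sigma>) * H (map (\<lambda>k. F (P k)) [0..<d])"
  using \<sigma> F
proof (induction \<sigma> arbitrary: F rule: permutes_induct)
  case id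
  then show ?case by simp
next
  case (swap a b p F)
  let ?t = "Transposition.transpose a b"
  have "\<forall>x\<in>K. (F \<circ> ?t) x \<in> vecs l"
    using swap.prems swap.hyps(1,2) by (auto simp: Transposition.transpose_def)
  then have IH: "H (map (\<lambda>k. F (?t (p (P k)))) [0..<d]) =
      of_int (sign p) * H (map (\<lambda>k. F (?t (P k))) [0..<d])"
    using swap.IH by (simp add: o_def)
  obtain i j where ij: "i < d" "P i = a" "j < d" "P j = b"
    using P swap.hyps(1,2) unfolding bij_betw_def by (metis imageE lessThan_iff)
  have "i \<noteq> j" using ij swap.hyps(3) by auto
  define xs where "xs = map (\<lambda>k. F (P k)) [0..<d]"
  have xs: "length xs = d" "set xs \<subseteq> vecs l"
    unfolding xs_def using swap.prems P by (auto simp: bij_betw_def)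
  have "map (\<lambda>k. F (?t (P k))) [0..<d] = xs[i := xs ! j, j := xs ! i]"
  proof (rule nth_equalityI)
    fix k assume "k < length (map (\<lambda>k. F (?t (P k))) [0..<d])"
    then have "k < d" by simp
    moreover have "k \<noteq> i \<Longrightarrow> P k \<noteq> a" "k \<noteq> j \<Longrightarrow> P k \<noteq> b"
      using ij \<open>k < d\<close> P by (metis bij_betw_def inj_on_eq_iff lessThan_iff)+
    ultimately show "map (\<lambda>k. F (?t (P k))) [0..<d] ! k = xs[i := xs ! j, j := xs ! i] ! k"
      using ij \<open>i \<noteq> j\<close> xs(1) unfolding xs_def
      by (cases "k = i"; cases "k = j") (auto simp: Transposition.transpose_def)
  qed (simp add: xs)
  then have "H (map (\<lambda>k. F (?t (P k))) [0..<d]) = - H xs"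
    using skew_form_swap[OF H xs ij(1,3) \<open>i \<noteq> j\<close>] by simp
  moreover have "sign (?t \<circ> p) = - sign p"
    using sign_compose[OF permutation_swap_id permutes_imp_permutation[OF \<open>finite K\<close> swap.hyps(4)]]
      swap.hyps(3) by (simp add: sign_swap_id)
  ultimately show ?case using IH unfolding xs_def by (simp add: o_def)
qed

section \<open>Half-edges\<close>

text \<open>A half-edge is a pair \<open>(e, b)\<close>: the head half of the arc \<open>e\<close> if \<open>b\<close>, its tail half otherwise.\<close>

definition flip_sides :: "'a set \<Rightarrow> 'a \<times> bool \<Rightarrow> 'a \<times> bool" where
  "flip_sides D x = (fst x, if fst x \<in> D then \<not> snd x else snd x)"

lemma flip_sides_flip_sides [simp]: "flip_sides D (flip_sides D x) = x"
  by (cases x) (simp add: flip_sides_def)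

lemma bij_betw_flip_sides: "bij_betw (flip_sides D) (A \<times> UNIV) (A \<times> UNIV)"
  by (rule bij_betw_byWitness[where f' = "flip_sides D"]) (auto simp: flip_sides_def)

lemma sign_on_flip_sides:
  assumes "finite A" "D \<subseteq> A"
  shows "sign_on (A \<times> UNIV) (flip_sides D) = (-1) ^ card D"
proof -
  have "finite D" using assms finite_subset by blast
  then show ?thesis using assms(2)
  proof (induction D rule: finite_induct)
    case empty
    have ident: "flip_sides {} = (\<lambda>x. x)" by (auto simp: flip_sides_def)
    show ?case unfolding ident by simp
  next
    case (insert e D)
    let ?t = "Transposition.transpose (e, True) (e, False)"
    have "flip_sides (insert e D) = ?t \<circ> flip_sides D"
      using insert.hyps(2) by (auto simp: fun_eq_iff flip_sides_def Transposition.transpose_def)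
    moreover have "bij_betw ?t (A \<times> UNIV) (A \<times> UNIV)"
      using insert.prems by (intro permutes_imp_bij permutes_swap_id) auto
    moreover have "finite (A \<times> (UNIV :: bool set))" using assms(1) by simp
    ultimately have "sign_on (A \<times> UNIV) (flip_sides (insert e D)) =
        sign_on (A \<times> UNIV) ?t * sign_on (A \<times> UNIV) (flip_sides D)"
      by (simp only: sign_on_compose bij_betw_flip_sides)
    moreover have "sign_on (A \<times> UNIV) ?t = -1"
      using insert.prems by (intro sign_on_transpose) auto
    ultimately show ?case using insert by simp
  qed
qed

lemma bij_betw_Pair_const:
  assumes "bij_betw f A A"
  shows "bij_betw (\<lambda>x. (f (fst x), c)) (A \<times> {c}) (A \<times> {c})"
  using assms by (auto simp: bij_betw_def inj_on_def image_iff) (metis imageE)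

lemma sign_on_Pair_const:
  assumes "bij_betw f A A" "finite A"
  shows "sign_on (A \<times> {c}) (\<lambda>x. (f (fst x), c)) = sign_on A f"
proof -
  have inj: "inj_on (\<lambda>a. (a, c)) A" by (simp add: inj_on_def)
  have img: "(\<lambda>a. (a, c)) ` A = A \<times> {c}" by auto
  have "sign_on (A \<times> {c}) (\<lambda>x. (f (fst x), c)) =
      sign (map_permutation A (\<lambda>a. (a, c)) (restrict_id f A))"
    unfolding sign_on_def map_permutation_def img
    by (intro arg_cong[of _ _ sign] restrict_id_cong) (auto simp: restrict_id_def inv_into_f_f[OF inj])
  also have "\<dots> = sign_on A f"
    unfolding sign_on_def using permutes_restrict_id[OF assms(1)] assms(2)
    by (rule sign_map_permutation[OF inj])
  finally show ?thesis .
qed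

definition half_vector :: "nat \<Rightarrow> ('e \<Rightarrow> nat) \<Rightarrow> 'e \<times> bool \<Rightarrow> nat \<Rightarrow> complex" where
  "half_vector l \<phi> x = (if snd x then ebasis (\<phi> (fst x)) else fbasis l (\<phi> (fst x)))"

definition dual_index :: "nat \<Rightarrow> nat \<Rightarrow> nat" where
  "dual_index l a = (if a \<le> l then a + l else a - l)"

lemma dual_index_mem: "a \<in> {1..2*l} \<Longrightarrow> dual_index l a \<in> {1..2*l}"
  unfolding dual_index_def by auto

lemma dual_index_dual_index: "a \<in> {1..2*l} \<Longrightarrow> dual_index l (dual_index l a) = a"
  unfolding dual_index_def by auto

lemma half_vector_mem_vecs:
  "\<phi> \<in> PiE E (\<lambda>_. {1..2*l}) \<Longrightarrow> fst x \<in> E \<Longrightarrow> half_vector l \<phi> x \<in> vecs l"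
  unfolding half_vector_def vecs_def fbasis_def ebasis_def by (auto simp: PiE_iff)

text \<open>For \<open>a' = dual_index l a\<close> we have \<open>f\<^sub>a\<^sub>' = e\<^sub>a\<close>, \<open>e\<^sub>a\<^sub>' = - f\<^sub>a\<close> if \<open>a \<le> l\<close> and
  \<open>f\<^sub>a\<^sub>' = - e\<^sub>a\<close>, \<open>e\<^sub>a\<^sub>' = f\<^sub>a\<close> otherwise, so exactly one half of \<open>e\<close> picks up a sign.\<close>
lemma half_vector_dual_flip:
  assumes "\<phi> e \<in> {1..2*l}" "e \<notin> D"
  shows "half_vector l (\<phi>(e := dual_index l (\<phi> e))) (flip_sides (insert e D) x) =
    (if x = (e, l < \<phi> e) then (\<lambda>j. - half_vector l \<phi> (flip_sides D x) j)
     else half_vector l \<phi> (flip_sides D x))"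
proof (cases "fst x = e")
  case False
  then show ?thesis by (auto simp: half_vector_def flip_sides_def)
next
  case True
  then obtain b where x: "x = (e, b)" by (cases x) auto
  show ?thesis
    using assms by (cases b; cases "\<phi> e \<le> l")
      (auto simp: x half_vector_def flip_sides_def dual_index_def fbasis_def ebasis_def fun_eq_iff)
qed

section \<open>Local orderings, circuits and reversal of arcs\<close>

definition state_sum ::
  "nat \<Rightarrow> (nat \<Rightarrow> (nat \<Rightarrow> complex) list \<Rightarrow> complex) \<Rightarrow> 'v set \<Rightarrow> 'e set \<Rightarrow> ('e \<Rightarrow> 'v \<times> 'v)
     \<Rightarrow> ('e \<Rightarrow> 'v \<times> 'v) \<Rightarrow> ('e \<Rightarrow> nat) \<Rightarrow> ('e \<Rightarrow> nat) \<Rightarrow> complex" where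
  "state_sum l h V E ends \<omega> kin kout =
     (\<Sum>\<phi>\<in>PiE E (\<lambda>_. {1..2*l}). \<Prod>v\<in>V. h (deg E ends v) (vertex_args l E ends \<omega> kin kout \<phi> v))"

text \<open>Balance of in- and out-degrees is not assumed: it follows from the local ordering.\<close>

locale eulerian_local_ordering =
  fixes V :: "'v set" and E :: "'e set" and ends :: "'e \<Rightarrow> 'v \<times> 'v"
    and \<omega> :: "'e \<Rightarrow> 'v \<times> 'v" and kin kout :: "'e \<Rightarrow> nat"
  assumes eulerian: "eulerian_graph V E ends"
    and oriented: "orientation E ends \<omega>"
    and ordered: "local_ordering V E ends \<omega> kin kout"
begin

abbreviation "degree v \<equiv> deg E ends v"

lemma finite_E: "finite E" and finite_V: "finite V"
  using eulerian unfolding eulerian_graph_def graph_def by blast+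

lemma even_degree: "v \<in> V \<Longrightarrow> even (degree v)"
  using eulerian unfolding eulerian_graph_def by blast

lemma arc_ends_in_V: "e \<in> E \<Longrightarrow> fst (\<omega> e) \<in> V \<and> snd (\<omega> e) \<in> V"
  using eulerian oriented unfolding eulerian_graph_def graph_def orientation_def
  by (cases "ends e") force

lemma bij_betw_kin: "v \<in> V \<Longrightarrow> bij_betw kin {e\<in>E. snd (\<omega> e) = v} {i. odd i \<and> i \<le> degree v - 1}"
  and bij_betw_kout: "v \<in> V \<Longrightarrow> bij_betw kout {e\<in>E. fst (\<omega> e) = v} {i. even i \<and> 2 \<le> i \<and> i \<le> degree v}"
  using ordered unfolding local_ordering_def by blast+

lemma kin_range: "e \<in> E \<Longrightarrow> odd (kin e) \<and> kin e \<le> degree (snd (\<omega> e)) - 1"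
  using bij_betw_apply[OF bij_betw_kin] arc_ends_in_V by blast

lemma kout_range: "e \<in> E \<Longrightarrow> even (kout e) \<and> 2 \<le> kout e \<and> kout e \<le> degree (fst (\<omega> e))"
  using bij_betw_apply[OF bij_betw_kout] arc_ends_in_V by blast

lemma in_arc_eq_the_inv_into: "in_arc E \<omega> kin v i = the_inv_into {e\<in>E. snd (\<omega> e) = v} kin i"
  unfolding in_arc_def the_inv_into_def by (simp add: conj_assoc)

lemma out_arc_eq_the_inv_into: "out_arc E \<omega> kout v i = the_inv_into {e\<in>E. fst (\<omega> e) = v} kout i"
  unfolding out_arc_def the_inv_into_def by (simp add: conj_assoc)

lemma in_arc:
  assumes "v \<in> V" "odd i" "i \<le> degree v - 1"
  shows "in_arc E \<omega> kin v i \<in> E \<and> snd (\<omega> (in_arc E \<omega> kin v i)) = v \<and> kin (in_arc E \<omega> kin v i) = i"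
proof -
  let ?A = "{e\<in>E. snd (\<omega> e) = v}"
  have inj: "inj_on kin ?A" and i: "i \<in> kin ` ?A"
    using bij_betw_kin[OF assms(1)] assms(2,3) unfolding bij_betw_def by auto
  show ?thesis
    using the_inv_into_into[OF inj i order_refl] f_the_inv_into_f[OF inj i]
    unfolding in_arc_eq_the_inv_into by simp
qed

lemma out_arc:
  assumes "v \<in> V" "even i" "2 \<le> i" "i \<le> degree v"
  shows "out_arc E \<omega> kout v i \<in> E \<and> fst (\<omega> (out_arc E \<omega> kout v i)) = v \<and> kout (out_arc E \<omega> kout v i) = i"
proof -
  let ?A = "{e\<in>E. fst (\<omega> e) = v}"
  have inj: "inj_on kout ?A" and i: "i \<in> kout ` ?A"
    using bij_betw_kout[OF assms(1)] assms(2-4) unfolding bij_betw_def by auto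
  show ?thesis
    using the_inv_into_into[OF inj i order_refl] f_the_inv_into_f[OF inj i]
    unfolding out_arc_eq_the_inv_into by simp
qed

lemma in_arc_kin:
  assumes "e \<in> E"
  shows "in_arc E \<omega> kin (snd (\<omega> e)) (kin e) = e"
proof -
  have "inj_on kin {e'\<in>E. snd (\<omega> e') = snd (\<omega> e)}"
    by (rule bij_betw_imp_inj_on[OF bij_betw_kin]) (use arc_ends_in_V[OF assms] in blast)
  then show ?thesis unfolding in_arc_eq_the_inv_into using assms by (simp add: the_inv_into_f_f)
qed

lemma out_arc_kout:
  assumes "e \<in> E"
  shows "out_arc E \<omega> kout (fst (\<omega> e)) (kout e) = e"
proof -
  have "inj_on kout {e'\<in>E. fst (\<omega> e') = fst (\<omega> e)}"
    by (rule bij_betw_imp_inj_on[OF bij_betw_kout]) (use arc_ends_in_V[OF assms] in blast)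
  then show ?thesis unfolding out_arc_eq_the_inv_into using assms by (simp add: the_inv_into_f_f)
qed

text \<open>The \<open>k\<close>-th argument (counting from 0) of the form at \<open>v\<close> comes from the half-edge at \<open>v\<close>
  with label \<open>k + 1\<close>.\<close>

definition half_label :: "'e \<times> bool \<Rightarrow> nat" where
  "half_label x = (if snd x then kin (fst x) else kout (fst x))"

definition halves :: "'v \<Rightarrow> ('e \<times> bool) set" where
  "halves v = {x. fst x \<in> E \<and> (if snd x then snd (\<omega> (fst x)) else fst (\<omega> (fst x))) = v}"

definition half_at :: "'v \<Rightarrow> nat \<Rightarrow> 'e \<times> bool" where
  "half_at v k = (if even k then (in_arc E \<omega> kin v (k + 1), True) else (out_arc E \<omega> kout v (k + 1), False))"

lemma finite_halves: "finite (halves v)"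
  by (rule finite_subset[of _ "E \<times> UNIV"]) (auto simp: halves_def finite_E)

lemma half_at_mem:
  assumes "v \<in> V" "k < degree v"
  shows "half_at v k \<in> halves v \<and> half_label (half_at v k) = k + 1"
proof (cases "even k")
  case True
  moreover have "k + 1 \<noteq> degree v" using True even_degree[OF assms(1)] by (metis even_plus_one_iff)
  ultimately have "k + 1 \<le> degree v - 1" using assms(2) by linarith
  then show ?thesis using in_arc[OF assms(1)] True by (simp add: half_at_def halves_def half_label_def)
next
  case False
  then show ?thesis using out_arc[OF assms(1)] assms(2) odd_pos[of k]
    by (simp add: half_at_def halves_def half_label_def)
qed

lemma half_at_half_label:
  assumes "x \<in> halves v"
  shows "half_label x - 1 < degree v \<and> half_at v (half_label x - 1) = x"
proof (cases x)
  case (Pair e b)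
  then show ?thesis
    using assms kin_range[of e] kout_range[of e] in_arc_kin[of e] out_arc_kout[of e] odd_pos[of "kin e"]
    by (cases b) (auto simp: halves_def half_label_def half_at_def)
qed

lemma bij_betw_half_at:
  assumes "v \<in> V"
  shows "bij_betw (half_at v) {..<degree v} (halves v)"
proof (rule bij_betw_byWitness[where f' = "\<lambda>x. half_label x - 1"])
  show "\<forall>k\<in>{..<degree v}. half_label (half_at v k) - 1 = k"
    and "half_at v ` {..<degree v} \<subseteq> halves v"
    using half_at_mem[OF assms] by auto
  show "\<forall>x\<in>halves v. half_at v (half_label x - 1) = x"
    and "(\<lambda>x. half_label x - 1) ` halves v \<subseteq> {..<degree v}"
    using half_at_half_label by auto
qed

lemma vertex_args_eq_map_half_vector:
  assumes "v \<in> V"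
  shows "vertex_args l E ends \<omega> kin kout \<phi> v = map (\<lambda>k. half_vector l \<phi> (half_at v k)) [0..<degree v]"
proof -
  have "vertex_args l E ends \<omega> kin kout \<phi> v =
      concat (map (\<lambda>j. [half_vector l \<phi> (half_at v (2*j)), half_vector l \<phi> (half_at v (2*j+1))])
        [0..<degree v div 2])"
  proof -
    have "half_at v (2*j) = (in_arc E \<omega> kin v (2*j+1), True)"
      and "half_at v (2*j+1) = (out_arc E \<omega> kout v (2*j+2), False)" for j
      by (simp_all add: half_at_def)
    then show ?thesis unfolding vertex_args_def half_vector_def by simp
  qed
  also have "\<dots> = map (\<lambda>k. half_vector l \<phi> (half_at v k)) [0..<2 * (degree v div 2)]"
    by (rule concat_map_pairs)
  finally show ?thesis using even_degree[OF assms] by simp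
qed

abbreviation "succ \<equiv> circ_next E \<omega> kin kout"

lemma succ_arc:
  assumes "e \<in> E"
  shows "succ e \<in> E \<and> fst (\<omega> (succ e)) = snd (\<omega> e) \<and> kout (succ e) = kin e + 1"
proof -
  have "even (kin e + 1)" "2 \<le> kin e + 1" "kin e + 1 \<le> degree (snd (\<omega> e))"
    using kin_range[OF assms] odd_pos[of "kin e"] by auto
  then show ?thesis using out_arc arc_ends_in_V[OF assms] unfolding circ_next_def by blast
qed

lemma bij_betw_succ: "bij_betw succ E E"
proof (rule bij_betw_of_inj_on_endo[OF finite_E])
  show "succ ` E \<subseteq> E" using succ_arc by blast
  show "inj_on succ E"
  proof (rule inj_onI)
    fix e1 e2 assume e: "e1 \<in> E" "e2 \<in> E" "succ e1 = succ e2"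
    then have "snd (\<omega> e1) = snd (\<omega> e2)" "kin e1 = kin e2"
      using succ_arc[OF e(1)] succ_arc[OF e(2)] by auto
    then show "e1 = e2" using in_arc_kin e(1,2) by metis
  qed
qed

lemma num_circuits_sign: "(-1::int) ^ num_circuits E \<omega> kin kout = (-1) ^ card E * sign_on E succ"
proof -
  let ?c = "restrict_id succ E"
  have c: "?c permutes E" by (rule permutes_restrict_id[OF bij_betw_succ])
  have "(?c ^^ n) e \<in> E" if "e \<in> E" for e n
    using that by (induction n) (simp_all add: succ_arc)
  then have "(succ ^^ n) e = (?c ^^ n) e" if "e \<in> E" for e n
    using that by (induction n) simp_all
  then have "{e'. \<exists>n. (succ ^^ n) e = e'} = orbit ?c e" if "e \<in> E" for e
    unfolding orbit_altdef_permutation[OF permutes_imp_permutation[OF finite_E c]]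
    using that by blast
  then have "num_circuits E \<omega> kin kout = card (orbit ?c ` E)"
    unfolding num_circuits_def by (intro arg_cong[of _ _ card] image_cong) auto
  then show ?thesis unfolding sign_on_def using sign_permutes_card_orbits[OF finite_E c] by simp
qed

lemma s_h_eq_state_sum:
  "s_h l h V E ends \<omega> kin kout = of_int ((-1) ^ card E * sign_on E succ) * state_sum l h V E ends \<omega> kin kout"
  unfolding s_h_def state_sum_def num_circuits_sign[symmetric] by simp

definition reversal_summand ::
  "nat \<Rightarrow> (nat \<Rightarrow> (nat \<Rightarrow> complex) list \<Rightarrow> complex) \<Rightarrow> 'e set \<Rightarrow> ('e \<Rightarrow> nat) \<Rightarrow> complex" where
  "reversal_summand l h D \<phi> =
     (\<Prod>v\<in>V. h (degree v) (map (\<lambda>k. half_vector l \<phi> (flip_sides D (half_at v k))) [0..<degree v]))"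

lemma sum_reversal_summand_empty:
  "(\<Sum>\<phi>\<in>PiE E (\<lambda>_. {1..2*l}). reversal_summand l h {} \<phi>) = state_sum l h V E ends \<omega> kin kout"
  unfolding state_sum_def reversal_summand_def
  by (intro sum.cong prod.cong refl) (simp add: vertex_args_eq_map_half_vector flip_sides_def)

lemma half_vectors_at_mem_vecs:
  assumes "\<phi> \<in> PiE E (\<lambda>_. {1..2*l})" "v \<in> V"
  shows "set (map (\<lambda>k. half_vector l \<phi> (flip_sides D (half_at v k))) [0..<degree v]) \<subseteq> vecs l"
proof
  fix y assume "y \<in> set (map (\<lambda>k. half_vector l \<phi> (flip_sides D (half_at v k))) [0..<degree v])"
  then obtain k where k: "k < degree v" "y = half_vector l \<phi> (flip_sides D (half_at v k))" by auto
  have "fst (flip_sides D (half_at v k)) \<in> E"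
    using half_at_mem[OF assms(2) k(1)] by (simp add: halves_def flip_sides_def)
  then show "y \<in> vecs l" using half_vector_mem_vecs[OF assms(1)] k(2) by simp
qed

lemma reversal_summand_insert:
  assumes h: "ext_dual l h" and e: "e \<in> E" "e \<notin> D" and \<phi>: "\<phi> \<in> PiE E (\<lambda>_. {1..2*l})"
  shows "reversal_summand l h (insert e D) (\<phi>(e := dual_index l (\<phi> e))) = - reversal_summand l h D \<phi>"
proof -
  define z where "z = (e, l < \<phi> e)"
  define v0 where "v0 = (if l < \<phi> e then snd (\<omega> e) else fst (\<omega> e))"
  define xs where "xs v = map (\<lambda>k. half_vector l \<phi> (flip_sides D (half_at v k))) [0..<degree v]" for v
  define ys where "ys v = map (\<lambda>k. half_vector l (\<phi>(e := dual_index l (\<phi> e)))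
      (flip_sides (insert e D) (half_at v k))) [0..<degree v]" for v
  have flip: "half_vector l (\<phi>(e := dual_index l (\<phi> e))) (flip_sides (insert e D) x) =
      (if x = z then (\<lambda>j. - half_vector l \<phi> (flip_sides D x) j) else half_vector l \<phi> (flip_sides D x))"
    for x unfolding z_def using e \<phi> by (intro half_vector_dual_flip) (auto simp: PiE_iff)
  have v0: "v0 \<in> V" "z \<in> halves v0"
    using arc_ends_in_V[OF e(1)] e(1) unfolding v0_def z_def halves_def by auto
  have other: "ys v = xs v" if "v \<in> V" "v \<noteq> v0" for v
  proof -
    have "z \<notin> halves v" using that(2) unfolding z_def v0_def halves_def by auto
    then show ?thesis using flip half_at_mem[OF that(1)] unfolding xs_def ys_def by auto
  qed
  have at_v0: "h (degree v0) (ys v0) = - h (degree v0) (xs v0)"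
  proof -
    obtain k0 where k0: "k0 < degree v0" "half_at v0 k0 = z"
      using bij_betw_half_at[OF v0(1)] v0(2) unfolding bij_betw_def by force
    have "half_at v0 k \<noteq> z" if "k < degree v0" "k \<noteq> k0" for k
      using that k0 bij_betw_imp_inj_on[OF bij_betw_half_at[OF v0(1)]] by (metis inj_onD lessThan_iff)
    then have "ys v0 = (xs v0)[k0 := (\<lambda>j. - (xs v0 ! k0) j)]"
      using k0 flip by (intro nth_equalityI) (auto simp: xs_def ys_def nth_list_update)
    moreover have "set (xs v0) \<subseteq> vecs l"
      unfolding xs_def by (rule half_vectors_at_mem_vecs[OF \<phi> v0(1)])
    moreover have "length (xs v0) = degree v0" by (simp add: xs_def)
    moreover have "multilinear_form l (degree v0) (h (degree v0))" using h unfolding ext_dual_def by blast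
    ultimately show ?thesis using multilinear_form_neg k0(1) by simp
  qed
  show ?thesis
    unfolding reversal_summand_def xs_def[symmetric] ys_def[symmetric]
    by (rule prod_eq_neg_of_one_factor[where g = "\<lambda>v. h (degree v) (ys v)"
          and f = "\<lambda>v. h (degree v) (xs v)", OF finite_V v0(1) at_v0])
      (simp add: other)
qed

lemma sum_reversal_summand:
  assumes h: "ext_dual l h" and D: "D \<subseteq> E"
  shows "(\<Sum>\<phi>\<in>PiE E (\<lambda>_. {1..2*l}). reversal_summand l h D \<phi>) =
    (-1) ^ card D * state_sum l h V E ends \<omega> kin kout"
proof -
  have "finite D" using D finite_E finite_subset by blast
  then show ?thesis using D
  proof (induction D rule: finite_induct)
    case empty
    then show ?case using sum_reversal_summand_empty by simp
  next
    case (insert e D)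
    let ?P = "PiE E (\<lambda>_. {1..2*l})"
    define \<Psi> where "\<Psi> \<phi> = \<phi>(e := dual_index l (\<phi> e))" for \<phi> :: "'e \<Rightarrow> nat"
    have e: "e \<in> E" using insert.prems by simp
    have "(\<Sum>\<phi>\<in>?P. reversal_summand l h (insert e D) \<phi>) =
        (\<Sum>\<phi>\<in>?P. reversal_summand l h (insert e D) (\<Psi> \<phi>))"
      by (rule sum.reindex_bij_witness[of _ \<Psi> \<Psi>])
        (use e dual_index_mem dual_index_dual_index in \<open>auto simp: \<Psi>_def PiE_iff extensional_def\<close>)
    also have "\<dots> = (\<Sum>\<phi>\<in>?P. - reversal_summand l h D \<phi>)"
      unfolding \<Psi>_def using reversal_summand_insert[OF h e insert.hyps(2)] by (intro sum.cong) auto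
    finally show ?case using insert by (simp add: sum_negf)
  qed
qed

end

section \<open>Comparing two local orderings\<close>

locale two_local_orderings =
  o1: eulerian_local_ordering V E ends \<omega>1 kin1 kout1 +
  o2: eulerian_local_ordering V E ends \<omega>2 kin2 kout2
  for V :: "'v set" and E :: "'e set" and ends :: "'e \<Rightarrow> 'v \<times> 'v"
    and \<omega>1 :: "'e \<Rightarrow> 'v \<times> 'v" and kin1 kout1 :: "'e \<Rightarrow> nat"
    and \<omega>2 :: "'e \<Rightarrow> 'v \<times> 'v" and kin2 kout2 :: "'e \<Rightarrow> nat"
begin

definition reversed :: "'e set" where
  "reversed = {e\<in>E. \<omega>1 e \<noteq> \<omega>2 e}"

lemma reversed_subset: "reversed \<subseteq> E"
  unfolding reversed_def by blast

lemma \<omega>2_eq_reversed: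
  assumes "e \<in> E"
  shows "\<omega>2 e = (if e \<in> reversed then prod.swap (\<omega>1 e) else \<omega>1 e)"
proof -
  have "\<omega>1 e = ends e \<or> \<omega>1 e = prod.swap (ends e)" "\<omega>2 e = ends e \<or> \<omega>2 e = prod.swap (ends e)"
    using assms o1.oriented o2.oriented unfolding orientation_def by blast+
  then show ?thesis unfolding reversed_def using assms by auto
qed

lemma flip_sides_mem_halves_iff: "flip_sides reversed x \<in> o2.halves v \<longleftrightarrow> x \<in> o1.halves v"
  using \<omega>2_eq_reversed[of "fst x"] unfolding o1.halves_def o2.halves_def flip_sides_def
  by (cases "\<omega>1 (fst x)") auto

definition in_relabel :: "'e \<Rightarrow> 'e" where
  "in_relabel e = in_arc E \<omega>1 kin1 (snd (\<omega>2 e)) (kin2 e)"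

definition out_relabel :: "'e \<Rightarrow> 'e" where
  "out_relabel e = out_arc E \<omega>1 kout1 (fst (\<omega>2 e)) (kout2 e)"

definition relabel :: "'e \<times> bool \<Rightarrow> 'e \<times> bool" where
  "relabel x = (if snd x then (in_relabel (fst x), True) else (out_relabel (fst x), False))"

lemma in_relabel:
  assumes "e \<in> E"
  shows "in_relabel e \<in> E \<and> snd (\<omega>1 (in_relabel e)) = snd (\<omega>2 e) \<and> kin1 (in_relabel e) = kin2 e"
  unfolding in_relabel_def
  by (rule o1.in_arc) (use o2.arc_ends_in_V[OF assms] o2.kin_range[OF assms] in auto)

lemma out_relabel:
  assumes "e \<in> E"
  shows "out_relabel e \<in> E \<and> fst (\<omega>1 (out_relabel e)) = fst (\<omega>2 e) \<and> kout1 (out_relabel e) = kout2 e"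
  unfolding out_relabel_def
  by (rule o1.out_arc) (use o2.arc_ends_in_V[OF assms] o2.kout_range[OF assms] in auto)

lemma bij_betw_in_relabel: "bij_betw in_relabel E E"
proof (rule bij_betw_of_inj_on_endo[OF o1.finite_E])
  show "in_relabel ` E \<subseteq> E" using in_relabel by blast
  show "inj_on in_relabel E"
  proof (rule inj_onI)
    fix e1 e2 assume e: "e1 \<in> E" "e2 \<in> E" "in_relabel e1 = in_relabel e2"
    then have "snd (\<omega>2 e1) = snd (\<omega>2 e2)" "kin2 e1 = kin2 e2"
      using in_relabel[OF e(1)] in_relabel[OF e(2)] by auto
    then show "e1 = e2" using o2.in_arc_kin e(1,2) by metis
  qed
qed

lemma bij_betw_out_relabel: "bij_betw out_relabel E E"
proof (rule bij_betw_of_inj_on_endo[OF o1.finite_E])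
  show "out_relabel ` E \<subseteq> E" using out_relabel by blast
  show "inj_on out_relabel E"
  proof (rule inj_onI)
    fix e1 e2 assume e: "e1 \<in> E" "e2 \<in> E" "out_relabel e1 = out_relabel e2"
    then have "fst (\<omega>2 e1) = fst (\<omega>2 e2)" "kout2 e1 = kout2 e2"
      using out_relabel[OF e(1)] out_relabel[OF e(2)] by auto
    then show "e1 = e2" using o2.out_arc_kout e(1,2) by metis
  qed
qed

lemma half_at_relabel:
  assumes "v \<in> V" "k < o1.degree v"
  shows "o1.half_at v k = relabel (o2.half_at v k)"
  using o2.half_at_mem[OF assms]
  by (cases "even k") (auto simp: o1.half_at_def o2.half_at_def o2.halves_def o2.half_label_def
      relabel_def in_relabel_def out_relabel_def)

definition relabel_flip :: "'e \<times> bool \<Rightarrow> 'e \<times> bool" where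
  "relabel_flip = flip_sides reversed \<circ> relabel"

lemma relabel_flip_half_at:
  "v \<in> V \<Longrightarrow> k < o1.degree v \<Longrightarrow> relabel_flip (o2.half_at v k) = flip_sides reversed (o1.half_at v k)"
  by (simp add: relabel_flip_def half_at_relabel)

lemma bij_betw_relabel_flip:
  assumes "v \<in> V"
  shows "bij_betw relabel_flip (o2.halves v) (o2.halves v)"
proof -
  have "bij_betw (flip_sides reversed) (o1.halves v) (o2.halves v)"
  proof (rule bij_betw_byWitness[where f' = "flip_sides reversed"])
    show "flip_sides reversed ` o1.halves v \<subseteq> o2.halves v"
      using flip_sides_mem_halves_iff by blast
    show "flip_sides reversed ` o2.halves v \<subseteq> o1.halves v"
      using flip_sides_mem_halves_iff[of "flip_sides reversed _"] by auto
  qed simp_all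
  then have "bij_betw (flip_sides reversed \<circ> o1.half_at v) {..<o1.degree v} (o2.halves v)"
    using o1.bij_betw_half_at[OF assms] by (rule bij_betw_trans[rotated])
  then have "bij_betw (relabel_flip \<circ> o2.half_at v) {..<o1.degree v} (o2.halves v)"
    by (rule bij_betw_cong[THEN iffD1, rotated]) (simp add: relabel_flip_half_at[OF assms])
  then show ?thesis using bij_betw_comp_iff[OF o2.bij_betw_half_at[OF assms]] by blast
qed

lemma skew_form_half_at_relabel:
  assumes H: "skew_form l (o1.degree v) H" and v: "v \<in> V" and \<phi>: "\<phi> \<in> PiE E (\<lambda>_. {1..2*l})"
  shows "H (map (\<lambda>k. half_vector l \<phi> (o1.half_at v k)) [0..<o1.degree v]) =
    of_int (sign_on (o2.halves v) relabel_flip) *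
    H (map (\<lambda>k. half_vector l \<phi> (flip_sides reversed (o2.half_at v k))) [0..<o1.degree v])"
proof -
  have "\<forall>x\<in>o2.halves v. half_vector l \<phi> (flip_sides reversed x) \<in> vecs l"
    using half_vector_mem_vecs[OF \<phi>] by (auto simp: o2.halves_def flip_sides_def)
  from skew_form_permutes[OF H permutes_restrict_id[OF bij_betw_relabel_flip[OF v]]
      o2.finite_halves o2.bij_betw_half_at[OF v] this]
  moreover have "map (\<lambda>k. half_vector l \<phi> (flip_sides reversed
        (restrict_id relabel_flip (o2.halves v) (o2.half_at v k)))) [0..<o1.degree v] =
      map (\<lambda>k. half_vector l \<phi> (o1.half_at v k)) [0..<o1.degree v]"
    using o2.half_at_mem[OF v] relabel_flip_half_at[OF v] by (intro map_cong) auto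
  ultimately show ?thesis unfolding sign_on_def by simp
qed

lemma sign_on_relabel_flip_eq_prod:
  "sign_on (E \<times> UNIV) relabel_flip = (\<Prod>v\<in>V. sign_on (o2.halves v) relabel_flip)"
proof -
  have "(\<Union>v\<in>V. o2.halves v) = E \<times> UNIV"
    using o2.arc_ends_in_V by (fastforce simp: o2.halves_def)
  moreover have "o2.halves v \<inter> o2.halves w = {}" if "v \<noteq> w" for v w
    using that by (auto simp: o2.halves_def)
  ultimately show ?thesis
    using sign_on_UN[of V o2.halves relabel_flip] o1.finite_V o2.finite_halves bij_betw_relabel_flip
    by presburger
qed

lemma sign_on_relabel_flip:
  "sign_on (E \<times> UNIV) relabel_flip = (-1) ^ card reversed * (sign_on E in_relabel * sign_on E out_relabel)"
proof -
  let ?K = "\<lambda>b. E \<times> {b}"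
  have "bij_betw relabel (?K True) (?K True)"
    using bij_betw_Pair_const[OF bij_betw_in_relabel]
    by (rule bij_betw_cong[THEN iffD1, rotated]) (auto simp: relabel_def)
  moreover have "bij_betw relabel (?K False) (?K False)"
    using bij_betw_Pair_const[OF bij_betw_out_relabel]
    by (rule bij_betw_cong[THEN iffD1, rotated]) (auto simp: relabel_def)
  ultimately have blocks: "bij_betw relabel (?K b) (?K b)" for b
    by (cases b) simp_all
  have UN: "(\<Union>b. ?K b) = E \<times> UNIV" by auto
  have "bij_betw relabel (E \<times> UNIV) (E \<times> UNIV)"
    unfolding UN[symmetric] by (rule bij_betw_UNION_disjoint) (use blocks in \<open>auto simp: disjoint_family_on_def\<close>)
  moreover have "sign_on (E \<times> UNIV) relabel = sign_on E in_relabel * sign_on E out_relabel"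
  proof -
    have "sign_on (E \<times> UNIV) relabel = (\<Prod>b\<in>UNIV. sign_on (?K b) relabel)"
      unfolding UN[symmetric] using o1.finite_E blocks by (intro sign_on_UN) auto
    also have "\<dots> = sign_on (?K True) (\<lambda>x. (in_relabel (fst x), True)) *
        sign_on (?K False) (\<lambda>x. (out_relabel (fst x), False))"
      unfolding UNIV_bool
      by (simp add: mult.commute, intro arg_cong2[of _ _ _ _ "(*)"] sign_on_cong)
        (auto simp: relabel_def)
    finally show ?thesis
      unfolding sign_on_Pair_const[OF bij_betw_in_relabel o1.finite_E]
        sign_on_Pair_const[OF bij_betw_out_relabel o1.finite_E] .
  qed
  ultimately show ?thesis
    unfolding relabel_flip_def
    using sign_on_compose[OF bij_betw_flip_sides _ finite_cartesian_product[OF o1.finite_E finite_UNIV]]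
      sign_on_flip_sides[OF o1.finite_E reversed_subset] by simp
qed

lemma out_relabel_succ: "e \<in> E \<Longrightarrow> out_relabel (o2.succ e) = o1.succ (in_relabel e)"
  using o2.succ_arc in_relabel unfolding out_relabel_def circ_next_def by simp

lemma sign_on_in_relabel_out_relabel:
  "sign_on E in_relabel * sign_on E out_relabel = sign_on E o1.succ * sign_on E o2.succ"
proof -
  have sq: "sign_on E f * sign_on E f = 1" for f :: "'e \<Rightarrow> 'e" by (simp add: sign_on_def)
  have "sign_on E out_relabel * sign_on E o2.succ = sign_on E (out_relabel \<circ> o2.succ)"
    using sign_on_compose[OF bij_betw_out_relabel o2.bij_betw_succ o1.finite_E] by simp
  also have "\<dots> = sign_on E (o1.succ \<circ> in_relabel)"
    using out_relabel_succ by (intro sign_on_cong) auto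
  also have "\<dots> = sign_on E o1.succ * sign_on E in_relabel"
    using sign_on_compose[OF o1.bij_betw_succ bij_betw_in_relabel o1.finite_E] by simp
  finally have comm: "sign_on E out_relabel * sign_on E o2.succ = sign_on E o1.succ * sign_on E in_relabel" .
  have "sign_on E in_relabel * sign_on E out_relabel =
      sign_on E in_relabel * (sign_on E out_relabel * sign_on E o2.succ) * sign_on E o2.succ"
    using sq[of o2.succ] by (simp add: mult.assoc)
  also have "\<dots> = (sign_on E in_relabel * sign_on E in_relabel) * (sign_on E o1.succ * sign_on E o2.succ)"
    unfolding comm by (simp add: mult_ac)
  finally show ?thesis using sq[of in_relabel] by simp
qed

lemma state_sum_relabel:
  assumes h: "ext_dual l h"
  shows "state_sum l h V E ends \<omega>1 kin1 kout1 =
    of_int (sign_on E o1.succ * sign_on E o2.succ) * state_sum l h V E ends \<omega>2 kin2 kout2"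
proof -
  let ?P = "PiE E (\<lambda>_. {1..2*l})"
  have "state_sum l h V E ends \<omega>1 kin1 kout1 =
      (\<Sum>\<phi>\<in>?P. \<Prod>v\<in>V. of_int (sign_on (o2.halves v) relabel_flip) *
        h (o1.degree v) (map (\<lambda>k. half_vector l \<phi> (flip_sides reversed (o2.half_at v k))) [0..<o1.degree v]))"
    unfolding state_sum_def using h unfolding ext_dual_def
    by (intro sum.cong prod.cong refl)
      (simp add: o1.vertex_args_eq_map_half_vector skew_form_half_at_relabel)
  also have "\<dots> = of_int (sign_on (E \<times> UNIV) relabel_flip) * (\<Sum>\<phi>\<in>?P. o2.reversal_summand l h reversed \<phi>)"
    unfolding sign_on_relabel_flip_eq_prod o2.reversal_summand_def
    by (simp add: prod.distrib sum_distrib_left)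
  also have "\<dots> = of_int (sign_on E o1.succ * sign_on E o2.succ) * state_sum l h V E ends \<omega>2 kin2 kout2"
    unfolding o2.sum_reversal_summand[OF h reversed_subset] sign_on_relabel_flip
      sign_on_in_relabel_out_relabel
    by (simp flip: power_add add: mult_ac)
  finally show ?thesis .
qed

end

theorem proposition1:
  fixes l :: nat
    and h :: "nat \<Rightarrow> (nat \<Rightarrow> complex) list \<Rightarrow> complex"
    and V :: "'v set" and E :: "'e set" and ends :: "'e \<Rightarrow> 'v \<times> 'v"
    and \<omega>1 \<omega>2 :: "'e \<Rightarrow> 'v \<times> 'v"
    and kin1 kout1 kin2 kout2 :: "'e \<Rightarrow> nat"
  assumes "ext_dual l h"
    and "eulerian_graph V E ends"
    and "eulerian_orientation V E ends \<omega>1"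
    and "local_ordering V E ends \<omega>1 kin1 kout1"
    and "eulerian_orientation V E ends \<omega>2"
    and "local_ordering V E ends \<omega>2 kin2 kout2"
  shows "s_h l h V E ends \<omega>1 kin1 kout1 = s_h l h V E ends \<omega>2 kin2 kout2"
proof -
  interpret two_local_orderings V E ends \<omega>1 kin1 kout1 \<omega>2 kin2 kout2
    using assms(2-6) unfolding two_local_orderings_def eulerian_local_ordering_def
      eulerian_orientation_def by blast
  let ?c1 = "sign_on E o1.succ" and ?c2 = "sign_on E o2.succ"
  have "s_h l h V E ends \<omega>1 kin1 kout1 =
      of_int ((-1) ^ card E * ?c1 * (?c1 * ?c2)) * state_sum l h V E ends \<omega>2 kin2 kout2"
    unfolding o1.s_h_eq_state_sum state_sum_relabel[OF assms(1)] by (simp add: mult.assoc)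
  also have "(-1) ^ card E * ?c1 * (?c1 * ?c2) = (-1) ^ card E * ?c2"
    by (simp add: sign_on_def mult.assoc flip: mult.assoc[of "sign _" "sign _"])
  finally show ?thesis unfolding o2.s_h_eq_state_sum .
qed

end
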